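(* Let $A\in\mathbb{R}^{n\times n}$ be symmetric positive definite, $b\in\mathbb{R}^n$, $B>0$, $L=\lambda_{\max}(A)$. For $y\in\mathbb{R}^n$ and $0<\eta\le 1/n$, define the threshold loop $\theta_0=0$, $\theta_{t+1}=\theta_t+\eta\big[\|\mathcal S_{\theta_t}(y)\|_1-B\big]_+$, where $\mathcal S_\theta(y)$ is computed by the two-layer ReLU network $W_2\,\mathrm{ReLU}(W_1y-\theta[\mathbf 1_n;\mathbf 1_n])$ with $W_1=\begin{bmatrix}I_n\\-I_n\end{bmatrix}$, $W_2=[I_n\ \ -I_n]$. Then $\theta_t$ converges to some $\theta^\star\ge0$ and $\mathcal S_{\theta^\star}(y)=\operatorname{Proj}_{\{\|x\|_1\le B\}}(y)$ is the exact Euclidean projection of $y$ onto the $\ell_1$-ball of radius $B$. Consequently, a gradient step $y_k=x_k-\gamma(Ax_k+b)$ followed by this loop yields $x_{k+1}=\operatorname{Proj}_{\{\|x\|_1\le B\}}\big(x_k-\gamma(Ax_k+b)\big)$, and if $0<\gamma\le1/L$, the iterates $x_k$ converge to an optimal solution of $\min_x \tfrac12x^\top Ax+b^\top x$ subject to $\|x\|_1\le B$.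
   Context: $\mathcal S_\theta(y)=\operatorname{sign}(y)\odot(|y|-\theta)_+$ is coordinatewise soft-thresholding; $[u]_+=\max\{u,0\}$; $\mathrm{ReLU}$ is applied elementwise; $\mathbf 1_n$ is the all-ones vector; $\operatorname{Proj}_{\{\|x\|_1\le B\}}$ denotes Euclidean projection onto $\{x:\|x\|_1\le B\}$. *)

theory Defs
  imports "HOL-Analysis.Analysis"
begin

definition l1norm :: "real^'n \<Rightarrow> real" where
  "l1norm x = (\<Sum>i\<in>UNIV. \<bar>x $ i\<bar>)"

definition l1ball :: "real \<Rightarrow> (real^'n) set" where
  "l1ball B = {x. l1norm x \<le> B}"

definition soft_thresh :: "real \<Rightarrow> real^'n \<Rightarrow> real^'n" where
  "soft_thresh \<theta> y = (\<chi> i. sgn (y $ i) * max (\<bar>y $ i\<bar> - \<theta>) 0)"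

definition relu :: "real^'m \<Rightarrow> real^'m" where
  "relu z = (\<chi> i. max (z $ i) 0)"

text \<open>W1 = [I; -I] (2n x n), W2 = [I, -I] (n x 2n); index set of size 2n is 'n + 'n\<close>
definition W1 :: "real^'n^('n + 'n)" where
  "W1 = (\<chi> k j. case k of Inl i \<Rightarrow> (if i = j then 1 else 0)
                        | Inr i \<Rightarrow> (if i = j then -1 else 0))"

definition W2 :: "real^('n + 'n)^'n" where
  "W2 = (\<chi> i k. case k of Inl j \<Rightarrow> (if i = j then 1 else 0)
                        | Inr j \<Rightarrow> (if i = j then -1 else 0))"

definition nn_soft :: "real \<Rightarrow> real^'n \<Rightarrow> real^'n" where
  "nn_soft \<theta> y = W2 *v relu (W1 *v y - \<theta> *\<^sub>R (1 :: real^('n + 'n)))"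

primrec thr_seq :: "real \<Rightarrow> real \<Rightarrow> real^'n \<Rightarrow> nat \<Rightarrow> real" where
  "thr_seq \<eta> B y 0 = 0"
| "thr_seq \<eta> B y (Suc t) =
     thr_seq \<eta> B y t + \<eta> * max (l1norm (nn_soft (thr_seq \<eta> B y t) y) - B) 0"

definition lambda_max :: "real^'n^'n \<Rightarrow> real" where
  "lambda_max A = Max {c. \<exists>v. v \<noteq> 0 \<and> A *v v = c *\<^sub>R v}"

definition quad_obj :: "real^'n^'n \<Rightarrow> real^'n \<Rightarrow> real^'n \<Rightarrow> real" where
  "quad_obj A b x = (1/2) * (x \<bullet> (A *v x)) + b \<bullet> x"

end

theory Submission
  imports Defs
begin

text \<open>For \<open>\<theta> \<ge> 0\<close> the network computes \<open>ReLU(y\<^sub>i - \<theta>) - ReLU(-y\<^sub>i - \<theta>)\<close>, which is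
  soft-thresholding. The map \<open>\<theta> \<mapsto> \<parallel>S\<^sub>\<theta>(y)\<parallel>\<^sub>1\<close> is continuous and \<open>n\<close>-Lipschitz, so with
  \<open>\<eta> \<le> 1/n\<close> the threshold loop is nondecreasing and, once it moves, never pushes
  \<open>\<parallel>S\<^sub>\<theta>(y)\<parallel>\<^sub>1\<close> below \<open>B\<close>. Its limit \<open>\<theta>\<close> therefore satisfies \<open>\<parallel>S\<^sub>\<theta>(y)\<parallel>\<^sub>1 \<le> B\<close> and
  \<open>\<theta> (\<parallel>S\<^sub>\<theta>(y)\<parallel>\<^sub>1 - B) = 0\<close>, and these KKT conditions are exactly what makes \<open>S\<^sub>\<theta>(y)\<close>
  satisfy the variational inequality characterising the projection onto the l1-ball.
  For the outer loop, \<open>\<mu>I \<le> A \<le> \<lambda>\<^sub>m\<^sub>a\<^sub>x I\<close> with \<open>\<mu> > 0\<close> and \<open>\<gamma> \<le> 1/\<lambda>\<^sub>m\<^sub>a\<^sub>x\<close> give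
  \<open>\<parallel>v - \<gamma>Av\<parallel>\<^sup>2 \<le> (1 - \<gamma>\<mu>) \<parallel>v\<parallel>\<^sup>2\<close>; as the projection is nonexpansive, projected gradient
  descent is a contraction, and its fixed point satisfies the first-order optimality
  condition of the convex quadratic program.\<close>

section \<open>Soft-thresholding as a ReLU network\<close>

lemma sum_UNIV_Plus:
  fixes f :: "'a::finite + 'b::finite \<Rightarrow> 'c::comm_monoid_add"
  shows "sum f UNIV = (\<Sum>i\<in>UNIV. f (Inl i)) + (\<Sum>j\<in>UNIV. f (Inr j))"
  using sum.Plus[of "UNIV :: 'a set" "UNIV :: 'b set" f] by (simp add: comp_def)

lemma W1_mult_Inl: "(W1 *v y) $ Inl i = y $ i"
  and W1_mult_Inr: "(W1 *v y) $ Inr i = - y $ i"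
  by (simp_all add: W1_def matrix_vector_mult_def if_distrib if_distribR cong: if_cong)

lemma W2_mult: "(W2 *v z) $ i = z $ Inl i - z $ Inr i"
  by (simp add: W2_def matrix_vector_mult_def sum_UNIV_Plus if_distrib if_distribR cong: if_cong)

lemma nn_soft_eq_soft_thresh:
  assumes "\<theta> \<ge> 0"
  shows "nn_soft \<theta> y = soft_thresh \<theta> y"
proof -
  have "nn_soft \<theta> y $ i = max (y $ i - \<theta>) 0 - max (- y $ i - \<theta>) 0" for i
    by (simp add: nn_soft_def W2_mult relu_def W1_mult_Inl W1_mult_Inr)
  then show ?thesis
    using assms by (auto simp: vec_eq_iff soft_thresh_def sgn_if max_def)
qed

section \<open>Projection onto the l1-ball\<close>

lemma closest_point_eqI:
  fixes S :: "'a::{real_inner,heine_borel} set"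
  assumes "convex S" "closed S" "x \<in> S"
    and variational: "\<And>z. z \<in> S \<Longrightarrow> inner (y - x) (z - x) \<le> 0"
  shows "closest_point S y = x"
proof -
  have "dist y x \<le> dist y z" if "z \<in> S" for z
  proof -
    have "(dist y z)\<^sup>2 = (dist y x)\<^sup>2 - 2 * inner (y - x) (z - x) + (norm (z - x))\<^sup>2"
      by (simp add: dist_norm power2_norm_eq_inner inner_diff_left inner_diff_right inner_commute)
    then have "(dist y x)\<^sup>2 \<le> (dist y z)\<^sup>2"
      using variational[OF that] zero_le_power2[of "norm (z - x)"] by linarith
    then show ?thesis
      by (rule power2_le_imp_le) simp
  qed
  then have "x = closest_point S y"
    by (intro closest_point_unique[OF assms(1-3)]) auto
  then show ?thesis
    by simp
qed

lemma convex_l1ball: "convex (l1ball B)"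
proof (rule convexI)
  fix x z :: "real^'n" and u v :: real
  assume "x \<in> l1ball B" "z \<in> l1ball B" "0 \<le> u" "0 \<le> v" "u + v = 1"
  have "l1norm (u *\<^sub>R x + v *\<^sub>R z) \<le> (\<Sum>i\<in>UNIV. u * \<bar>x $ i\<bar> + v * \<bar>z $ i\<bar>)"
    unfolding l1norm_def using \<open>0 \<le> u\<close> \<open>0 \<le> v\<close>
    by (intro sum_mono) (simp add: order_trans[OF abs_triangle_ineq] abs_mult)
  also have "\<dots> = u * l1norm x + v * l1norm z"
    by (simp add: l1norm_def sum.distrib sum_distrib_left)
  also have "\<dots> \<le> u * B + v * B"
    using \<open>x \<in> l1ball B\<close> \<open>z \<in> l1ball B\<close> \<open>0 \<le> u\<close> \<open>0 \<le> v\<close>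
    by (intro add_mono mult_left_mono) (auto simp: l1ball_def)
  finally show "u *\<^sub>R x + v *\<^sub>R z \<in> l1ball B"
    using \<open>u + v = 1\<close> by (simp add: l1ball_def flip: distrib_right)
qed

lemma closed_l1ball: "closed (l1ball B)"
  unfolding l1ball_def l1norm_def by (intro closed_Collect_le continuous_intros)

lemma l1ball_nonempty:
  assumes "B \<ge> 0"
  shows "l1ball B \<noteq> {}"
proof -
  have "0 \<in> l1ball B"
    using assms by (simp add: l1ball_def l1norm_def)
  then show ?thesis
    by blast
qed

lemma soft_thresh_residual:
  fixes t \<theta> :: real
  assumes "\<theta> \<ge> 0"
  defines "s \<equiv> sgn t * max (\<bar>t\<bar> - \<theta>) 0"
  shows "\<bar>t - s\<bar> \<le> \<theta>" and "(t - s) * s = \<theta> * \<bar>s\<bar>"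
  using assms by (cases t "0::real" rule: linorder_cases; simp add: s_def max_def algebra_simps)+

lemma closest_point_l1ball_soft_thresh:
  fixes y :: "real^'n"
  assumes "\<theta> \<ge> 0"
    and feasible: "l1norm (soft_thresh \<theta> y) \<le> B"
    and slack: "\<theta> * (l1norm (soft_thresh \<theta> y) - B) = 0"
  shows "closest_point (l1ball B) y = soft_thresh \<theta> y"
proof (rule closest_point_eqI[OF convex_l1ball closed_l1ball])
  let ?x = "soft_thresh \<theta> y"
  have x: "?x $ i = sgn (y $ i) * max (\<bar>y $ i\<bar> - \<theta>) 0" for i
    by (simp add: soft_thresh_def)
  show "?x \<in> l1ball B"
    using feasible by (simp add: l1ball_def)
  fix z :: "real^'n"
  assume "z \<in> l1ball B"
  have "inner (y - ?x) z \<le> (\<Sum>i\<in>UNIV. \<theta> * \<bar>z $ i\<bar>)"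
    unfolding inner_vec_def inner_real_def
  proof (rule sum_mono)
    fix i
    have "(y - ?x) $ i * z $ i \<le> \<bar>y $ i - ?x $ i\<bar> * \<bar>z $ i\<bar>"
      by (metis abs_ge_self abs_mult vector_minus_component)
    also have "\<dots> \<le> \<theta> * \<bar>z $ i\<bar>"
      unfolding x by (simp add: mult_right_mono soft_thresh_residual(1)[OF \<open>\<theta> \<ge> 0\<close>])
    finally show "(y - ?x) $ i * z $ i \<le> \<theta> * \<bar>z $ i\<bar>" .
  qed
  also have "\<dots> = \<theta> * l1norm z"
    by (simp add: l1norm_def sum_distrib_left)
  also have "\<dots> \<le> \<theta> * B"
    using \<open>z \<in> l1ball B\<close> \<open>\<theta> \<ge> 0\<close> by (simp add: l1ball_def mult_left_mono)
  also have "\<dots> = \<theta> * l1norm ?x"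
    using slack by auto
  also have "\<dots> = inner (y - ?x) ?x"
    unfolding inner_vec_def inner_real_def l1norm_def sum_distrib_left vector_minus_component x
    by (intro sum.cong refl soft_thresh_residual(2)[OF \<open>\<theta> \<ge> 0\<close>, symmetric])
  finally show "inner (y - ?x) (z - ?x) \<le> 0"
    by (simp add: inner_diff_right)
qed

section \<open>The threshold iteration\<close>

locale threshold_iteration =
  fixes g :: "real \<Rightarrow> real" and \<eta> c B :: real and s :: "nat \<Rightarrow> real"
  assumes s_0: "s 0 = 0"
    and s_Suc: "\<And>t. s (Suc t) = s t + \<eta> * max (g (s t) - B) 0"
    and eta_pos: "\<eta> > 0"
    and eta_le: "\<eta> * c \<le> 1"
    and g_lipschitz: "\<And>\<theta> \<theta>'. \<theta> \<le> \<theta>' \<Longrightarrow> g \<theta> - g \<theta>' \<le> c * (\<theta>' - \<theta>)"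
begin

lemma incseq: "incseq s"
  by (rule incseq_SucI) (simp add: s_Suc less_imp_le[OF eta_pos])

lemma nonneg: "s t \<ge> 0"
  using incseq s_0 by (metis incseq_def zero_le)

text \<open>Since \<open>\<eta> \<le> 1/c\<close>, a step taken while \<open>g\<close> exceeds \<open>B\<close> lowers \<open>g\<close> by at most the excess,
  so \<open>g\<close> never drops below \<open>B\<close> once the threshold has started to move.\<close>
lemma active: "s t = 0 \<or> B \<le> g (s t)"
proof (induction t)
  case 0
  show ?case by (simp add: s_0)
next
  case (Suc t)
  show ?case
  proof (cases "g (s t) \<le> B")
    case True
    then show ?thesis using Suc by (simp add: s_Suc)
  next
    case False
    then have step: "s (Suc t) - s t = \<eta> * (g (s t) - B)"
      by (simp add: s_Suc)
    have "g (s t) - g (s (Suc t)) \<le> c * (s (Suc t) - s t)"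
      using incseq by (intro g_lipschitz) (simp add: incseq_SucD)
    also have "\<dots> = (\<eta> * c) * (g (s t) - B)"
      by (simp add: step)
    also have "\<dots> \<le> g (s t) - B"
      using eta_le False by (simp add: mult_left_le_one_le)
    finally show ?thesis by simp
  qed
qed

lemma bounded:
  assumes "\<And>\<theta>. R \<le> \<theta> \<Longrightarrow> g \<theta> < B"
  shows "s t \<le> max R 0"
  using active[of t] assms[of "s t"] by linarith

lemma tendsto_complementary_slackness:
  assumes g_cont: "continuous_on UNIV g"
    and g_small: "\<And>\<theta>. R \<le> \<theta> \<Longrightarrow> g \<theta> < B"
  shows "\<exists>L\<ge>0. s \<longlonglongrightarrow> L \<and> g L \<le> B \<and> L * (g L - B) = 0"
proof -
  have "bdd_above (range s)"
    using bounded[OF g_small] by (intro bdd_aboveI[where M = "max R 0"]) auto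
  then obtain L where lim: "s \<longlonglongrightarrow> L"
    using LIMSEQ_incseq_SUP incseq by blast
  have "L \<ge> 0"
    using lim nonneg by (intro LIMSEQ_le_const) auto
  have g_lim: "(\<lambda>t. g (s t)) \<longlonglongrightarrow> g L"
    using g_cont lim by (intro isCont_tendsto_compose[of L g]) (simp_all add: continuous_on_eq_continuous_at)
  have "(\<lambda>t. s (Suc t)) \<longlonglongrightarrow> L + \<eta> * max (g L - B) 0"
    unfolding s_Suc by (intro tendsto_intros lim g_lim)
  then have "L = L + \<eta> * max (g L - B) 0"
    using LIMSEQ_unique[OF LIMSEQ_Suc[OF lim]] by blast
  then have "g L \<le> B"
    using eta_pos by simp
  moreover have "g L = B" if "L > 0"
  proof -
    have "\<forall>\<^sub>F t in sequentially. s t > 0"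
      using lim that by (rule order_tendstoD)
    moreover have "B \<le> g (s t)" if "s t > 0" for t
      using active[of t] that by auto
    ultimately have "\<forall>\<^sub>F t in sequentially. B \<le> g (s t)"
      by (rule eventually_mono)
    then have "B \<le> g L"
      using g_lim by (intro tendsto_lowerbound) auto
    then show ?thesis
      using \<open>g L \<le> B\<close> by simp
  qed
  ultimately have "L * (g L - B) = 0"
    using \<open>L \<ge> 0\<close> by (cases "L > 0") auto
  then show ?thesis
    using \<open>L \<ge> 0\<close> lim \<open>g L \<le> B\<close> by blast
qed

end

definition shrink_l1norm :: "real^'n \<Rightarrow> real \<Rightarrow> real" where
  "shrink_l1norm y \<theta> = (\<Sum>i\<in>UNIV. max (\<bar>y $ i\<bar> - \<theta>) 0)"

lemma l1norm_soft_thresh: "\<theta> \<ge> 0 \<Longrightarrow> l1norm (soft_thresh \<theta> y) = shrink_l1norm y \<theta>"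
  unfolding l1norm_def shrink_l1norm_def soft_thresh_def
  by (intro sum.cong refl) (auto simp: abs_mult sgn_if max_def)

lemma shrink_l1norm_lipschitz:
  fixes y :: "real^'n"
  assumes "\<theta> \<le> \<theta>'"
  shows "shrink_l1norm y \<theta> - shrink_l1norm y \<theta>' \<le> real CARD('n) * (\<theta>' - \<theta>)"
proof -
  have "shrink_l1norm y \<theta> - shrink_l1norm y \<theta>'
      = (\<Sum>i\<in>UNIV. max (\<bar>y $ i\<bar> - \<theta>) 0 - max (\<bar>y $ i\<bar> - \<theta>') 0)"
    by (simp add: shrink_l1norm_def sum_subtractf)
  also have "\<dots> \<le> (\<Sum>i\<in>(UNIV :: 'n set). \<theta>' - \<theta>)"
    using assms by (intro sum_mono) (auto simp: max_def)
  finally show ?thesis by simp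
qed

lemma continuous_on_shrink_l1norm: "continuous_on S (shrink_l1norm y)"
  unfolding shrink_l1norm_def by (intro continuous_intros)

lemma shrink_l1norm_eq_0:
  assumes "l1norm y \<le> \<theta>"
  shows "shrink_l1norm y \<theta> = 0"
proof -
  have "\<bar>y $ i\<bar> \<le> \<theta>" for i
    using member_le_sum[of i UNIV "\<lambda>i. \<bar>y $ i\<bar>"] assms by (simp add: l1norm_def)
  then show ?thesis
    by (simp add: shrink_l1norm_def)
qed

lemma thr_seq_nonneg: "\<eta> > 0 \<Longrightarrow> thr_seq \<eta> B y t \<ge> 0"
  by (induction t) auto

lemma thr_seq_tendsto_closest_point:
  fixes y :: "real^'n"
  assumes "0 < \<eta>" "\<eta> \<le> 1 / real CARD('n)" "B > 0"
  shows "\<exists>\<theta>s\<ge>0. thr_seq \<eta> B y \<longlonglongrightarrow> \<theta>s \<and> nn_soft \<theta>s y = closest_point (l1ball B) y"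
proof -
  interpret threshold_iteration "shrink_l1norm y" \<eta> "real CARD('n)" B "thr_seq \<eta> B y"
  proof
    show "thr_seq \<eta> B y (Suc t) = thr_seq \<eta> B y t + \<eta> * max (shrink_l1norm y (thr_seq \<eta> B y t) - B) 0"
      for t using thr_seq_nonneg[OF \<open>0 < \<eta>\<close>, of B y t]
      by (simp add: nn_soft_eq_soft_thresh l1norm_soft_thresh)
    show "\<eta> * real CARD('n) \<le> 1"
      using assms by (simp add: field_simps)
  qed (simp_all add: \<open>0 < \<eta>\<close> shrink_l1norm_lipschitz)
  have "shrink_l1norm y \<theta> < B" if "l1norm y \<le> \<theta>" for \<theta>
    using shrink_l1norm_eq_0[OF that] \<open>B > 0\<close> by simp
  then obtain \<theta>s where "\<theta>s \<ge> 0" "thr_seq \<eta> B y \<longlonglongrightarrow> \<theta>s"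
    and "shrink_l1norm y \<theta>s \<le> B" "\<theta>s * (shrink_l1norm y \<theta>s - B) = 0"
    using tendsto_complementary_slackness[OF continuous_on_shrink_l1norm] by blast
  moreover from this have "nn_soft \<theta>s y = closest_point (l1ball B) y"
    using closest_point_l1ball_soft_thresh[of \<theta>s y B]
    by (simp add: l1norm_soft_thresh nn_soft_eq_soft_thresh)
  ultimately show ?thesis
    by blast
qed

lemma nn_soft_lim_thr_seq_eq_closest_point:
  fixes y :: "real^'n"
  assumes "0 < \<eta>" "\<eta> \<le> 1 / real CARD('n)" "B > 0" and lim: "thr_seq \<eta> B y \<longlonglongrightarrow> \<theta>"
  shows "nn_soft \<theta> y = closest_point (l1ball B) y"
proof -
  obtain \<theta>s where "thr_seq \<eta> B y \<longlonglongrightarrow> \<theta>s" "nn_soft \<theta>s y = closest_point (l1ball B) y"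
    using thr_seq_tendsto_closest_point[OF assms(1-3)] by blast
  moreover have "\<theta>s = \<theta>"
    using LIMSEQ_unique[OF calculation(1) lim] .
  ultimately show ?thesis
    by simp
qed

section \<open>Quadratic forms of symmetric matrices\<close>

lemma inner_matrix_vector_symmetric:
  fixes A :: "real^'n^'n"
  assumes "transpose A = A"
  shows "u \<bullet> (A *v w) = (A *v u) \<bullet> w"
  using dot_lmul_matrix[of u "transpose A" w] vector_transpose_matrix[of u A] assms by simp

lemma quadratic_form_scaleR:
  fixes A :: "real^'n^'n"
  shows "(c *\<^sub>R u) \<bullet> (A *v (c *\<^sub>R u)) = c\<^sup>2 * (u \<bullet> (A *v u))"
  by (simp add: matrix_vector_mult_scaleR power2_eq_square)

lemma quadratic_form_le_max_on_sphere:
  fixes A :: "real^'n^'n"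
  shows "\<exists>v. norm v = 1 \<and> (\<forall>w. w \<bullet> (A *v w) \<le> (v \<bullet> (A *v v)) * (norm w)\<^sup>2)"
proof -
  have "continuous_on (sphere 0 1) (\<lambda>u::real^'n. u \<bullet> (A *v u))"
    by (intro continuous_intros linear_continuous_on matrix_vector_mul_bounded_linear)
  moreover have "sphere (0::real^'n) 1 \<noteq> {}"
    by simp
  ultimately obtain v where "v \<in> sphere 0 1" "\<forall>u\<in>sphere 0 1. u \<bullet> (A *v u) \<le> v \<bullet> (A *v v)"
    using continuous_attains_sup[OF compact_sphere] by blast
  then have v: "norm v = 1" and max: "\<And>u. norm u = 1 \<Longrightarrow> u \<bullet> (A *v u) \<le> v \<bullet> (A *v v)"
    by simp_all
  have "w \<bullet> (A *v w) \<le> (v \<bullet> (A *v v)) * (norm w)\<^sup>2" for w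
  proof (cases "w = 0")
    case False
    let ?u = "inverse (norm w) *\<^sub>R w"
    have "w \<bullet> (A *v w) = (norm w)\<^sup>2 * ((inverse (norm w))\<^sup>2 * (w \<bullet> (A *v w)))"
      using False by (simp add: field_simps)
    also have "\<dots> = (norm w)\<^sup>2 * (?u \<bullet> (A *v ?u))"
      by (simp only: quadratic_form_scaleR)
    also have "\<dots> \<le> (norm w)\<^sup>2 * (v \<bullet> (A *v v))"
      using False by (intro mult_left_mono max) simp_all
    finally show ?thesis by (simp add: mult.commute)
  qed simp
  with v show ?thesis by blast
qed

lemma quadratic_form_ge_min_on_sphere:
  fixes A :: "real^'n^'n"
  shows "\<exists>v. norm v = 1 \<and> (\<forall>w. (v \<bullet> (A *v v)) * (norm w)\<^sup>2 \<le> w \<bullet> (A *v w))"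
proof -
  have neg: "(- A) *v w = - (A *v w)" for w :: "real^'n"
    by (simp add: vec_eq_iff matrix_vector_mult_def sum_negf)
  show ?thesis
    using quadratic_form_le_max_on_sphere[of "- A"] by (simp add: neg)
qed

lemma psd_quadratic_form_eq_0_imp_null:
  fixes C :: "real^'n^'n"
  assumes sym: "transpose C = C" and psd: "\<And>x. 0 \<le> x \<bullet> (C *v x)"
    and zero: "v \<bullet> (C *v v) = 0"
  shows "C *v v = 0"
proof (rule ccontr)
  define w where "w = C *v v"
  define K where "K = w \<bullet> (C *v w)"
  assume "C *v v \<noteq> 0"
  then have ww: "w \<bullet> w > 0"
    by (simp add: w_def)
  have "K \<ge> 0"
    using psd by (simp add: K_def)
  define t where "t = (w \<bullet> w) / (K + 1)"
  have "t > 0"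
    using ww \<open>K \<ge> 0\<close> by (simp add: t_def)
  have "t * K < w \<bullet> w"
    using ww \<open>K \<ge> 0\<close> by (simp add: t_def field_simps)
  have "v \<bullet> (C *v w) = w \<bullet> w"
    using inner_matrix_vector_symmetric[OF sym, of v w] by (simp add: w_def)
  moreover have "v \<bullet> w = 0"
    using zero by (simp add: w_def)
  moreover have "C *v (v - t *\<^sub>R w) = w - t *\<^sub>R (C *v w)"
    by (simp add: w_def matrix_vector_mult_diff_distrib matrix_vector_mult_scaleR)
  ultimately have "(v - t *\<^sub>R w) \<bullet> (C *v (v - t *\<^sub>R w)) = t * (t * K - 2 * (w \<bullet> w))"
    by (simp add: K_def inner_diff_left inner_diff_right algebra_simps)
  then have "0 \<le> t * (t * K - 2 * (w \<bullet> w))"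
    using psd[of "v - t *\<^sub>R w"] by linarith
  then show False
    using \<open>t > 0\<close> \<open>t * K < w \<bullet> w\<close> ww by (simp add: zero_le_mult_iff)
qed

text \<open>Eigenvectors for distinct eigenvalues are orthogonal, hence independent. Finiteness is
  what makes the \<open>Max\<close> in \<open>lambda_max\<close> meaningful.\<close>
lemma finite_eigenvalues_symmetric:
  fixes A :: "real^'n^'n"
  assumes sym: "transpose A = A"
  shows "finite {c. \<exists>v. v \<noteq> 0 \<and> A *v v = c *\<^sub>R v}" (is "finite ?E")
proof -
  define f where "f c = (SOME v. v \<noteq> 0 \<and> A *v v = c *\<^sub>R v)" for c
  have f: "f c \<noteq> 0 \<and> A *v f c = c *\<^sub>R f c" if "c \<in> ?E" for c
  proof -
    from that obtain v where "v \<noteq> 0 \<and> A *v v = c *\<^sub>R v"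
      by blast
    then show ?thesis
      unfolding f_def by (rule someI)
  qed
  have orth: "f c \<bullet> f d = 0" if "c \<in> ?E" "d \<in> ?E" "c \<noteq> d" for c d
  proof -
    have "c * (f c \<bullet> f d) = f c \<bullet> (A *v f d)"
      using f[OF that(1)] inner_matrix_vector_symmetric[OF sym, of "f c" "f d"] by simp
    also have "\<dots> = d * (f c \<bullet> f d)"
      using f[OF that(2)] by simp
    finally show ?thesis
      using that(3) by simp
  qed
  have inj: "inj_on f ?E"
  proof (rule inj_onI)
    fix c d
    assume "c \<in> ?E" "d \<in> ?E" "f c = f d"
    then show "c = d"
      using orth[of c d] f[of c] by auto
  qed
  have "pairwise orthogonal (f ` ?E)"
    unfolding pairwise_def orthogonal_def using orth by auto
  moreover have "0 \<notin> f ` ?E"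
    using f by (metis (no_types, lifting) imageE)
  ultimately have "finite (f ` ?E)"
    by (intro independent_imp_finite pairwise_orthogonal_independent)
  then show ?thesis
    using inj by (rule finite_imageD)
qed

lemma quadratic_form_le_lambda_max:
  fixes A :: "real^'n^'n"
  assumes sym: "transpose A = A"
  shows "w \<bullet> (A *v w) \<le> lambda_max A * (norm w)\<^sup>2"
proof -
  obtain v where v: "norm v = 1" and max: "\<And>w. w \<bullet> (A *v w) \<le> (v \<bullet> (A *v v)) * (norm w)\<^sup>2"
    using quadratic_form_le_max_on_sphere[of A] by blast
  define M where "M = v \<bullet> (A *v v)"
  define C where "C = M *\<^sub>R mat 1 - A"
  have C: "C *v x = M *\<^sub>R x - A *v x" for x
    by (simp add: C_def matrix_vector_mult_diff_rdistrib flip: scaleR_matrix_vector_assoc)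
  have "transpose C = C"
    using sym by (simp add: C_def vec_eq_iff transpose_def mat_def)
  moreover have "0 \<le> x \<bullet> (C *v x)" for x
    using max[of x] by (simp add: C inner_diff_right M_def power2_norm_eq_inner)
  moreover have "v \<bullet> (C *v v) = 0"
    using v by (simp add: C inner_diff_right M_def flip: power2_norm_eq_inner)
  ultimately have "C *v v = 0"
    by (rule psd_quadratic_form_eq_0_imp_null)
  then have "v \<noteq> 0 \<and> A *v v = M *\<^sub>R v"
    using v by (auto simp: C)
  then have "M \<le> lambda_max A"
    unfolding lambda_max_def using finite_eigenvalues_symmetric[OF sym] by (auto intro: Max_ge)
  then show ?thesis
    using max[of w] mult_right_mono[of M "lambda_max A" "(norm w)\<^sup>2"] by (simp add: M_def)
qed

lemma pos_def_quadratic_form_ge: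
  fixes A :: "real^'n^'n"
  assumes pd: "\<forall>x. x \<noteq> 0 \<longrightarrow> x \<bullet> (A *v x) > 0"
  shows "\<exists>\<mu>>0. \<forall>w. \<mu> * (norm w)\<^sup>2 \<le> w \<bullet> (A *v w)"
proof -
  obtain v where "norm v = 1" and min: "\<forall>w. (v \<bullet> (A *v v)) * (norm w)\<^sup>2 \<le> w \<bullet> (A *v w)"
    using quadratic_form_ge_min_on_sphere[of A] by blast
  then have "v \<noteq> 0"
    by (metis norm_zero zero_neq_one)
  then have "v \<bullet> (A *v v) > 0"
    using pd by blast
  with min show ?thesis
    by blast
qed

text \<open>Cocoercivity: expand \<open>0 \<le> q(A v / M - v)\<close> for the quadratic form \<open>q\<close> of \<open>A\<close>.\<close>
lemma norm_matrix_vector_square_le: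
  fixes A :: "real^'n^'n"
  assumes sym: "transpose A = A" and psd: "\<And>x. 0 \<le> x \<bullet> (A *v x)"
    and upper: "\<And>w. w \<bullet> (A *v w) \<le> M * (norm w)\<^sup>2" and "M > 0"
  shows "(norm (A *v v))\<^sup>2 \<le> M * (v \<bullet> (A *v v))"
proof -
  define w where "w = A *v v"
  define t where "t = 1 / M"
  have "v \<bullet> (A *v w) = w \<bullet> w"
    using inner_matrix_vector_symmetric[OF sym, of v w] by (simp add: w_def)
  moreover have "A *v (t *\<^sub>R w - v) = t *\<^sub>R (A *v w) - w"
    by (simp add: w_def matrix_vector_mult_diff_distrib matrix_vector_mult_scaleR)
  ultimately have "(t *\<^sub>R w - v) \<bullet> (A *v (t *\<^sub>R w - v))
      = t\<^sup>2 * (w \<bullet> (A *v w)) - 2 * t * (w \<bullet> w) + v \<bullet> (A *v v)"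
    by (simp add: inner_diff_left inner_diff_right power2_eq_square algebra_simps
        w_def[symmetric] inner_commute[of v w])
  also have "\<dots> \<le> t\<^sup>2 * (M * (w \<bullet> w)) - 2 * t * (w \<bullet> w) + v \<bullet> (A *v v)"
    using upper[of w] by (simp add: power2_norm_eq_inner mult_left_mono)
  also have "\<dots> = v \<bullet> (A *v v) - (w \<bullet> w) / M"
    using \<open>M > 0\<close> by (simp add: t_def power2_eq_square field_simps)
  finally have "(w \<bullet> w) / M \<le> v \<bullet> (A *v v)"
    using psd[of "t *\<^sub>R w - v"] by linarith
  then show ?thesis
    using \<open>M > 0\<close> by (simp add: w_def power2_norm_eq_inner field_simps)
qed

lemma norm_gradient_step_square_le:
  fixes A :: "real^'n^'n"
  assumes sym: "transpose A = A"
    and lower: "\<And>w. \<mu> * (norm w)\<^sup>2 \<le> w \<bullet> (A *v w)" and "\<mu> \<ge> 0"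
    and upper: "\<And>w. w \<bullet> (A *v w) \<le> M * (norm w)\<^sup>2" and "M > 0"
    and "0 < \<gamma>" "\<gamma> * M \<le> 1"
  shows "(norm (v - \<gamma> *\<^sub>R (A *v v)))\<^sup>2 \<le> (1 - \<gamma> * \<mu>) * (norm v)\<^sup>2"
proof -
  have psd: "0 \<le> x \<bullet> (A *v x)" for x
    using lower[of x] mult_nonneg_nonneg[OF \<open>\<mu> \<ge> 0\<close> zero_le_power2[of "norm x"]] by linarith
  define a where "a = v \<bullet> (A *v v)"
  have "\<gamma>\<^sup>2 * (norm (A *v v))\<^sup>2 \<le> \<gamma>\<^sup>2 * (M * a)"
    unfolding a_def by (intro mult_left_mono norm_matrix_vector_square_le[OF sym psd upper \<open>M > 0\<close>]) simp
  also have "\<dots> = \<gamma> * ((\<gamma> * M) * a)"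
    by (simp add: power2_eq_square)
  also have "\<dots> \<le> \<gamma> * (1 * a)"
    using \<open>\<gamma> * M \<le> 1\<close> \<open>0 < \<gamma>\<close> psd[of v] unfolding a_def
    by (intro mult_left_mono mult_right_mono) simp_all
  finally have step: "\<gamma>\<^sup>2 * (norm (A *v v))\<^sup>2 \<le> \<gamma> * a"
    by simp
  have "v \<bullet> (\<gamma> *\<^sub>R (A *v v))
      = ((norm v)\<^sup>2 + \<gamma>\<^sup>2 * (norm (A *v v))\<^sup>2 - (norm (v - \<gamma> *\<^sub>R (A *v v)))\<^sup>2) / 2"
    using dot_norm_neg[of v "\<gamma> *\<^sub>R (A *v v)"] by (simp add: power_mult_distrib)
  then have "(norm (v - \<gamma> *\<^sub>R (A *v v)))\<^sup>2 = (norm v)\<^sup>2 - 2 * \<gamma> * a + \<gamma>\<^sup>2 * (norm (A *v v))\<^sup>2"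
    by (simp add: a_def)
  also have "\<dots> \<le> (norm v)\<^sup>2 - \<gamma> * (\<mu> * (norm v)\<^sup>2)"
    using step mult_left_mono[OF lower[of v] less_imp_le[OF \<open>0 < \<gamma>\<close>]] unfolding a_def
    by linarith
  finally show ?thesis
    by (simp add: algebra_simps)
qed

lemma gradient_step_contraction:
  fixes A :: "real^'n^'n"
  assumes sym: "transpose A = A" and pd: "\<forall>x. x \<noteq> 0 \<longrightarrow> x \<bullet> (A *v x) > 0"
    and "0 < \<gamma>" and "\<gamma> \<le> 1 / lambda_max A"
  shows "\<exists>q. 0 \<le> q \<and> q < 1 \<and> (\<forall>v. norm (v - \<gamma> *\<^sub>R (A *v v)) \<le> q * norm v)"
proof -
  obtain \<mu> where "\<mu> > 0" and lower: "\<And>w. \<mu> * (norm w)\<^sup>2 \<le> w \<bullet> (A *v w)"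
    using pos_def_quadratic_form_ge[OF pd] by blast
  have upper: "w \<bullet> (A *v w) \<le> lambda_max A * (norm w)\<^sup>2" for w
    by (rule quadratic_form_le_lambda_max[OF sym])
  have "\<mu> \<le> lambda_max A"
    using lower[of "axis undefined 1"] upper[of "axis undefined 1"] by (simp add: norm_axis_1)
  then have "lambda_max A > 0" "\<gamma> * lambda_max A \<le> 1"
    using \<open>\<mu> > 0\<close> \<open>\<gamma> \<le> 1 / lambda_max A\<close> by (simp_all add: field_simps)
  then have "\<gamma> * \<mu> \<le> 1"
    using mult_left_mono[OF \<open>\<mu> \<le> lambda_max A\<close> less_imp_le[OF \<open>0 < \<gamma>\<close>]] by linarith
  note sq = norm_gradient_step_square_le[OF sym lower less_imp_le[OF \<open>\<mu> > 0\<close>] upper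
      \<open>lambda_max A > 0\<close> \<open>0 < \<gamma>\<close> \<open>\<gamma> * lambda_max A \<le> 1\<close>]
  define q where "q = sqrt (1 - \<gamma> * \<mu>)"
  have "norm (v - \<gamma> *\<^sub>R (A *v v)) \<le> q * norm v" for v
    using real_sqrt_le_mono[OF sq[of v]] \<open>\<gamma> * \<mu> \<le> 1\<close> by (simp add: q_def real_sqrt_mult)
  moreover have "0 \<le> q" "q < 1"
    using \<open>\<gamma> * \<mu> \<le> 1\<close> \<open>0 < \<gamma>\<close> \<open>\<mu> > 0\<close> by (simp_all add: q_def)
  ultimately show ?thesis
    by blast
qed

section \<open>Projected gradient descent\<close>

lemma quad_obj_add:
  fixes A :: "real^'n^'n"
  assumes sym: "transpose A = A"
  shows "quad_obj A b (x + d) = quad_obj A b x + (A *v x + b) \<bullet> d + (1/2) * (d \<bullet> (A *v d))"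
proof -
  have "x \<bullet> (A *v d) = (A *v x) \<bullet> d"
    by (rule inner_matrix_vector_symmetric[OF sym])
  then show ?thesis
    by (simp add: quad_obj_def matrix_vector_right_distrib inner_add_left inner_add_right
        inner_commute[of d "A *v x"] algebra_simps)
qed

lemma projected_gradient_fixed_point_minimal:
  fixes A :: "real^'n^'n" and S :: "(real^'n) set"
  assumes "convex S" "closed S" "z \<in> S"
    and sym: "transpose A = A" and psd: "\<And>x. 0 \<le> x \<bullet> (A *v x)"
    and "0 < \<gamma>" and fixed: "closest_point S (x - \<gamma> *\<^sub>R (A *v x + b)) = x"
  shows "quad_obj A b x \<le> quad_obj A b z"
proof -
  have "inner ((x - \<gamma> *\<^sub>R (A *v x + b)) - x) (z - x) \<le> 0"
    using closest_point_dot[OF assms(1-3), of "x - \<gamma> *\<^sub>R (A *v x + b)"] fixed by simp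
  then have "0 \<le> (A *v x + b) \<bullet> (z - x)"
    using \<open>0 < \<gamma>\<close> by (simp add: zero_le_mult_iff)
  moreover have "quad_obj A b z = quad_obj A b x + (A *v x + b) \<bullet> (z - x) + (1/2) * ((z - x) \<bullet> (A *v (z - x)))"
    using quad_obj_add[OF sym, of b x "z - x"] by simp
  ultimately show ?thesis
    using psd[of "z - x"] by linarith
qed

lemma contraction_iterates_tendsto_fixed_point:
  fixes T :: "'a::complete_space \<Rightarrow> 'a"
  assumes "0 \<le> q" "q < 1" and contr: "\<And>u v. dist (T u) (T v) \<le> q * dist u v"
    and iter: "\<And>k. x (Suc k) = T (x k)"
  shows "\<exists>p. T p = p \<and> x \<longlonglongrightarrow> p"
proof -
  obtain p where "T p = p"
    using banach_fix_type[OF assms(1,2)] contr by blast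
  have dist_le: "dist (x k) p \<le> q ^ k * dist (x 0) p" for k
  proof (induction k)
    case (Suc k)
    have "dist (x (Suc k)) p \<le> q * dist (x k) p"
      using contr[of "x k" p] by (simp add: iter \<open>T p = p\<close>)
    also have "\<dots> \<le> q * (q ^ k * dist (x 0) p)"
      using Suc \<open>0 \<le> q\<close> by (rule mult_left_mono)
    finally show ?case
      by simp
  qed simp
  have "(\<lambda>k. q ^ k * dist (x 0) p) \<longlonglongrightarrow> 0"
    using assms(1,2) by (intro tendsto_mult_left_zero LIMSEQ_power_zero) simp
  then have "(\<lambda>k. dist (x k) p) \<longlonglongrightarrow> 0"
    by (rule Lim_null_comparison[rotated]) (simp add: dist_le)
  then show ?thesis
    using \<open>T p = p\<close> tendsto_dist_iff by blast
qed

lemma projected_gradient_converges: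
  fixes A :: "real^'n^'n" and S :: "(real^'n) set"
  assumes "convex S" "closed S" "S \<noteq> {}"
    and sym: "transpose A = A" and pd: "\<forall>x. x \<noteq> 0 \<longrightarrow> x \<bullet> (A *v x) > 0"
    and "0 < \<gamma>" "\<gamma> \<le> 1 / lambda_max A"
    and iter: "\<And>k. x (Suc k) = closest_point S (x k - \<gamma> *\<^sub>R (A *v x k + b))"
  shows "\<exists>xs. x \<longlonglongrightarrow> xs \<and> xs \<in> S \<and> (\<forall>z\<in>S. quad_obj A b xs \<le> quad_obj A b z)"
proof -
  define T where "T z = closest_point S (z - \<gamma> *\<^sub>R (A *v z + b))" for z
  obtain q where "0 \<le> q" "q < 1" and q: "\<And>v. norm (v - \<gamma> *\<^sub>R (A *v v)) \<le> q * norm v"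
    using gradient_step_contraction[OF sym pd \<open>0 < \<gamma>\<close> \<open>\<gamma> \<le> 1 / lambda_max A\<close>] by blast
  have T_contraction: "dist (T u) (T v) \<le> q * dist u v" for u v
  proof -
    have "dist (T u) (T v) \<le> dist (u - \<gamma> *\<^sub>R (A *v u + b)) (v - \<gamma> *\<^sub>R (A *v v + b))"
      unfolding T_def using assms(1-3) by (rule closest_point_lipschitz)
    also have "\<dots> = norm ((u - v) - \<gamma> *\<^sub>R (A *v (u - v)))"
      by (simp add: dist_norm matrix_vector_mult_diff_distrib algebra_simps)
    also have "\<dots> \<le> q * dist u v"
      using q by (simp add: dist_norm)
    finally show ?thesis .
  qed
  have x_Suc: "x (Suc k) = T (x k)" for k
    by (simp add: T_def iter)
  obtain xs where "T xs = xs" "x \<longlonglongrightarrow> xs"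
    using contraction_iterates_tendsto_fixed_point[where T = T and x = x,
        OF \<open>0 \<le> q\<close> \<open>q < 1\<close> T_contraction x_Suc]
    by blast
  have "xs \<in> S"
    using closest_point_in_set[OF assms(2,3), of "xs - \<gamma> *\<^sub>R (A *v xs + b)"] \<open>T xs = xs\<close>
    unfolding T_def by simp
  have psd: "0 \<le> w \<bullet> (A *v w)" for w
    using pd by (cases "w = 0") (auto intro: less_imp_le)
  have "quad_obj A b xs \<le> quad_obj A b z" if "z \<in> S" for z
    using projected_gradient_fixed_point_minimal[OF assms(1,2) that sym psd \<open>0 < \<gamma>\<close>, of xs b]
      \<open>T xs = xs\<close> unfolding T_def by simp
  with \<open>x \<longlonglongrightarrow> xs\<close> \<open>xs \<in> S\<close> show ?thesis
    by blast
qed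

theorem proposition4:
  fixes A :: "real^'n^'n" and b :: "real^'n" and B :: real
  assumes symA: "transpose A = A"
    and pdA: "\<forall>x. x \<noteq> 0 \<longrightarrow> x \<bullet> (A *v x) > 0"
    and Bpos: "B > 0"
  shows "(\<forall>\<theta> y. \<theta> \<ge> 0 \<longrightarrow> nn_soft \<theta> y = soft_thresh \<theta> (y :: real^'n))
     \<and> (\<forall>(y :: real^'n) \<eta>. 0 < \<eta> \<and> \<eta> \<le> 1 / real CARD('n) \<longrightarrow>
          (\<exists>\<theta>s. \<theta>s \<ge> 0 \<and> thr_seq \<eta> B y \<longlonglongrightarrow> \<theta>s
                 \<and> nn_soft \<theta>s y = closest_point (l1ball B) y))
     \<and> (\<forall>(\<gamma>::real) (\<eta>::real) (x :: nat \<Rightarrow> real^'n) (\<theta> :: nat \<Rightarrow> real).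
          0 < \<gamma> \<and> \<gamma> \<le> 1 / lambda_max A \<and> 0 < \<eta> \<and> \<eta> \<le> 1 / real CARD('n)
          \<and> (\<forall>k. thr_seq \<eta> B (x k - \<gamma> *\<^sub>R (A *v x k + b)) \<longlonglongrightarrow> \<theta> k)
          \<and> (\<forall>k. x (Suc k) = nn_soft (\<theta> k) (x k - \<gamma> *\<^sub>R (A *v x k + b)))
          \<longrightarrow> (\<forall>k. x (Suc k) = closest_point (l1ball B) (x k - \<gamma> *\<^sub>R (A *v x k + b)))
            \<and> (\<exists>xs. x \<longlonglongrightarrow> xs \<and> xs \<in> l1ball B
                   \<and> (\<forall>z \<in> l1ball B. quad_obj A b xs \<le> quad_obj A b z)))"
proof (intro conjI allI impI; (elim conjE)?)
  show "nn_soft \<theta> y = soft_thresh \<theta> y" if "\<theta> \<ge> 0" for \<theta> and y :: "real^'n"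
    using that by (rule nn_soft_eq_soft_thresh)
  show "\<exists>\<theta>s\<ge>0. thr_seq \<eta> B y \<longlonglongrightarrow> \<theta>s \<and> nn_soft \<theta>s y = closest_point (l1ball B) y"
    if "0 < \<eta>" "\<eta> \<le> 1 / real CARD('n)" for \<eta> and y :: "real^'n"
    using thr_seq_tendsto_closest_point[OF that Bpos] .
  fix \<gamma> \<eta> :: real and x :: "nat \<Rightarrow> real^'n" and \<theta> :: "nat \<Rightarrow> real"
  assume \<gamma>: "0 < \<gamma>" "\<gamma> \<le> 1 / lambda_max A" and \<eta>: "0 < \<eta>" "\<eta> \<le> 1 / real CARD('n)"
    and thr_lim: "\<forall>k. thr_seq \<eta> B (x k - \<gamma> *\<^sub>R (A *v x k + b)) \<longlonglongrightarrow> \<theta> k"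
    and x_Suc: "\<forall>k. x (Suc k) = nn_soft (\<theta> k) (x k - \<gamma> *\<^sub>R (A *v x k + b))"
  show proj: "x (Suc k) = closest_point (l1ball B) (x k - \<gamma> *\<^sub>R (A *v x k + b))" for k
    using nn_soft_lim_thr_seq_eq_closest_point[OF \<eta> Bpos thr_lim[rule_format, of k]] x_Suc by simp
  show "\<exists>xs. x \<longlonglongrightarrow> xs \<and> xs \<in> l1ball B \<and> (\<forall>z\<in>l1ball B. quad_obj A b xs \<le> quad_obj A b z)"
    using projected_gradient_converges[where x = x, OF convex_l1ball closed_l1ball
        l1ball_nonempty[OF less_imp_le[OF Bpos]] symA pdA \<gamma> proj] .
qed

end
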